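(* Let $(M,h)$ be a Riemannian manifold, $p\in C^\infty(M)$, $\omega^\sharp$ the $h$-gradient of $p$, $\bar g>0$, and $\mathbf{G}^T=-\bar g\,\omega^\sharp$. Fix $x\in M$ and $\tilde\eta\in(0,1]$, put $b=\|\omega^\sharp\|_h(x)$, and assume $\tilde\eta\|\mathbf{G}^T\|_h(x)<1$ (i.e. $\tilde\eta\bar g b<1$). Let $\phi(s)=\frac{1}{1+\tilde\eta\bar g s}$ for $|s|\le b$. Then the following are equivalent: (i) $\phi(s)-s\phi'(s)+(b^2-s^2)\phi''(s)>0$ for all $s$ with $|s|\le b$; (ii) $|s|\le b<b_0$ for all such $s$, where $b_0=\frac{1}{2\tilde\eta\bar g}$; (iii) $\|\mathbf{G}^T\|_h(x)<\frac{1}{2\tilde\eta}$.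
   Context: Here $s$ plays the role of $\beta/\alpha$ with $\alpha=\sqrt{h(y,y)}$, $\beta=h(y,\omega^\sharp)$, $y\in T_xM\setminus\{0\}$, so that $|s|\le b$ by Cauchy–Schwarz; note $\|\mathbf{G}^T\|_h=\bar g\,b$. *)

theory Defs
  imports "HOL-Analysis.Analysis"
begin

end

theory Submission
  imports Defs
begin

text \<open>With \<open>k = \<eta> g\<close> and \<open>\<phi>(s) = 1/(1 + k s)\<close>, a direct computation gives
  \<open>\<phi> - s\<phi>' + (b\<^sup>2 - s\<^sup>2)\<phi>'' = (1 + 3ks + 2k\<^sup>2b\<^sup>2)/(1 + ks)\<^sup>3\<close>.
  On \<open>|s| \<le> b\<close> the denominator is positive because \<open>kb < 1\<close>, and the numerator is
  increasing in \<open>s\<close>, with minimum \<open>1 - 3kb + 2k\<^sup>2b\<^sup>2 = (1 - kb)(1 - 2kb)\<close> at \<open>s = -b\<close>.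
  Hence positivity on the whole interval is equivalent to \<open>kb < 1/2\<close>, and both other
  conditions are rewritings of \<open>kb < 1/2\<close>.\<close>

lemma has_real_derivative_inverse_affine:
  fixes k s :: real
  assumes "1 + k * s \<noteq> 0"
  shows "((\<lambda>s. 1 / (1 + k * s)) has_real_derivative - k / (1 + k * s)\<^sup>2) (at s)"
  using assms by (auto intro!: derivative_eq_intros simp: power2_eq_square)

lemma has_real_derivative_inverse_affine_squared:
  fixes k s :: real
  assumes "1 + k * s \<noteq> 0"
  shows "((\<lambda>s. - k / (1 + k * s)\<^sup>2) has_real_derivative 2 * k\<^sup>2 / (1 + k * s) ^ 3) (at s)"
proof -
  have simplify: "- (- k * (2 * u * k)) / (u\<^sup>2)\<^sup>2 = 2 * k\<^sup>2 / u ^ 3" if "u \<noteq> 0" for u :: real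
    using that by (simp add: power2_eq_square power3_eq_cube field_simps)
  have "((\<lambda>s. - k / (1 + k * s)\<^sup>2) has_real_derivative
          - (- k * (2 * (1 + k * s) * k)) / ((1 + k * s)\<^sup>2)\<^sup>2) (at s)"
    using assms by (auto intro!: derivative_eq_intros)
  then show ?thesis
    by (rule DERIV_cong) (rule simplify[OF assms])
qed

lemma deriv_inverse_affine:
  fixes k s :: real
  assumes "1 + k * s \<noteq> 0"
  shows "deriv (\<lambda>s. 1 / (1 + k * s)) s = - k / (1 + k * s)\<^sup>2"
  using has_real_derivative_inverse_affine[OF assms] by (rule DERIV_imp_deriv)

lemma deriv2_inverse_affine:
  fixes k s :: real
  assumes "1 + k * s \<noteq> 0"
  shows "deriv (deriv (\<lambda>s. 1 / (1 + k * s))) s = 2 * k\<^sup>2 / (1 + k * s) ^ 3"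
proof -
  have "open {x. 1 + k * x \<noteq> 0}"
    by (intro open_Collect_neq continuous_intros)
  then have "eventually (\<lambda>x. 1 + k * x \<noteq> 0) (nhds s)"
    using assms eventually_nhds_in_open by fastforce
  then have "eventually (\<lambda>x. deriv (\<lambda>s. 1 / (1 + k * s)) x = - k / (1 + k * x)\<^sup>2) (nhds s)"
    by eventually_elim (rule deriv_inverse_affine)
  then have "deriv (deriv (\<lambda>s. 1 / (1 + k * s))) s = deriv (\<lambda>x. - k / (1 + k * x)\<^sup>2) s"
    by (rule deriv_cong_ev) simp
  also have "\<dots> = 2 * k\<^sup>2 / (1 + k * s) ^ 3"
    using has_real_derivative_inverse_affine_squared[OF assms] by (rule DERIV_imp_deriv)
  finally show ?thesis .
qed

lemma inverse_affine_combination_eq: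
  fixes k s b :: real
  assumes ks: "1 + k * s \<noteq> 0"
  defines "\<phi> \<equiv> \<lambda>s. 1 / (1 + k * s)"
  shows "\<phi> s - s * deriv \<phi> s + (b\<^sup>2 - s\<^sup>2) * deriv (deriv \<phi>) s
           = (1 + 3 * k * s + 2 * (k * b)\<^sup>2) / (1 + k * s) ^ 3"
  using ks unfolding \<phi>_def deriv_inverse_affine[OF ks] deriv2_inverse_affine[OF ks]
  by (simp add: divide_simps) (simp add: algebra_simps power2_eq_square power3_eq_cube)

lemma mult_ge_neg_bound:
  fixes k b s :: real
  assumes "k \<ge> 0" "\<bar>s\<bar> \<le> b"
  shows "- (k * b) \<le> k * s"
proof -
  have "k * - s \<le> k * b"
    using assms by (intro mult_left_mono) auto
  then show ?thesis
    by simp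
qed

lemma inverse_affine_combination_pos_iff:
  fixes k b :: real
  assumes k: "k > 0" and b: "b \<ge> 0" and kb: "k * b < 1"
  defines "\<phi> \<equiv> \<lambda>s. 1 / (1 + k * s)"
  shows "(\<forall>s. \<bar>s\<bar> \<le> b \<longrightarrow> \<phi> s - s * deriv \<phi> s + (b\<^sup>2 - s\<^sup>2) * deriv (deriv \<phi>) s > 0)
           \<longleftrightarrow> k * b < 1/2"
proof -
  have combination_pos_iff:
    "\<phi> s - s * deriv \<phi> s + (b\<^sup>2 - s\<^sup>2) * deriv (deriv \<phi>) s > 0
       \<longleftrightarrow> 1 + 3 * k * s + 2 * (k * b)\<^sup>2 > 0" if "\<bar>s\<bar> \<le> b" for s
  proof -
    have "1 + k * s > 0"
      using mult_ge_neg_bound[of k s b] k kb that by simp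
    then show ?thesis
      using inverse_affine_combination_eq[of k s b] by (simp add: \<phi>_def zero_less_divide_iff)
  qed
  have minimum: "(1 - k * b) * (1 - 2 * k * b) = 1 + 3 * k * - b + 2 * (k * b)\<^sup>2"
    by (simp add: algebra_simps power2_eq_square)
  show ?thesis
  proof
    assume pos: "\<forall>s. \<bar>s\<bar> \<le> b \<longrightarrow> \<phi> s - s * deriv \<phi> s + (b\<^sup>2 - s\<^sup>2) * deriv (deriv \<phi>) s > 0"
    have left_end: "\<bar>- b\<bar> \<le> b"
      using b by simp
    have "(1 - k * b) * (1 - 2 * k * b) > 0"
      unfolding minimum using combination_pos_iff[OF left_end] pos left_end by blast
    with kb show "k * b < 1/2"
      by (simp add: zero_less_mult_iff)
  next
    assume half: "k * b < 1/2"
    show "\<forall>s. \<bar>s\<bar> \<le> b \<longrightarrow> \<phi> s - s * deriv \<phi> s + (b\<^sup>2 - s\<^sup>2) * deriv (deriv \<phi>) s > 0"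
    proof (intro allI impI)
      fix s
      assume s: "\<bar>s\<bar> \<le> b"
      have "- (k * b) \<le> k * s"
        using mult_ge_neg_bound k s by simp
      moreover have "(1 - k * b) * (1 - 2 * k * b) > 0"
        using half kb by simp
      ultimately have "1 + 3 * k * s + 2 * (k * b)\<^sup>2 > 0"
        unfolding minimum by simp
      then show "\<phi> s - s * deriv \<phi> s + (b\<^sup>2 - s\<^sup>2) * deriv (deriv \<phi>) s > 0"
        using combination_pos_iff[OF s] by simp
    qed
  qed
qed

theorem lemma3p1:
  fixes w :: "'a::real_inner" and gbar eta :: real
  assumes gpos: "gbar > 0"
    and eta: "0 < eta" "eta \<le> 1"
    and small: "eta * norm (- gbar *\<^sub>R w) < 1"
  defines "b \<equiv> norm w"
    and "GTx \<equiv> - gbar *\<^sub>R w"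
    and "\<phi> \<equiv> (\<lambda>s::real. 1 / (1 + eta * gbar * s))"
  shows "((\<forall>s. \<bar>s\<bar> \<le> b \<longrightarrow>
            \<phi> s - s * deriv \<phi> s + (b\<^sup>2 - s\<^sup>2) * deriv (deriv \<phi>) s > 0)
          \<longleftrightarrow> (\<forall>s. \<bar>s\<bar> \<le> b \<longrightarrow> \<bar>s\<bar> \<le> b \<and> b < 1 / (2 * eta * gbar)))
       \<and> ((\<forall>s. \<bar>s\<bar> \<le> b \<longrightarrow> \<bar>s\<bar> \<le> b \<and> b < 1 / (2 * eta * gbar))
          \<longleftrightarrow> norm GTx < 1 / (2 * eta))"
proof -
  define k where "k = eta * gbar"
  have k: "k > 0"
    using gpos eta by (simp add: k_def)
  have kb: "k * b < 1"
    using small gpos by (simp add: k_def b_def mult.assoc)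
  have "(\<forall>s. \<bar>s\<bar> \<le> b \<longrightarrow> \<phi> s - s * deriv \<phi> s + (b\<^sup>2 - s\<^sup>2) * deriv (deriv \<phi>) s > 0)
          \<longleftrightarrow> k * b < 1/2"
    using inverse_affine_combination_pos_iff[OF k _ kb] by (simp add: \<phi>_def k_def b_def)
  moreover have "(\<forall>s. \<bar>s\<bar> \<le> b \<longrightarrow> \<bar>s\<bar> \<le> b \<and> b < 1 / (2 * eta * gbar)) \<longleftrightarrow> k * b < 1/2"
  proof -
    have "(\<forall>s. \<bar>s\<bar> \<le> b \<longrightarrow> \<bar>s\<bar> \<le> b \<and> b < 1 / (2 * eta * gbar)) \<longleftrightarrow> b < 1 / (2 * k)"
      using abs_zero norm_ge_zero unfolding k_def b_def mult.assoc by metis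
    also have "\<dots> \<longleftrightarrow> k * b < 1/2"
      using k by (simp add: pos_less_divide_eq algebra_simps)
    finally show ?thesis .
  qed
  moreover have "norm GTx < 1 / (2 * eta) \<longleftrightarrow> k * b < 1/2"
    using gpos eta by (simp add: GTx_def b_def k_def pos_less_divide_eq algebra_simps)
  ultimately show ?thesis
    by blast
qed

end
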